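(* Let $R>0$, let $\partial\mathcal{B}=\{\boldsymbol{x}\in\mathbb{R}^d:\|\boldsymbol{x}\|_2=R\}$, and let $\boldsymbol{x}_0\in\mathbb{R}^d$ with $\boldsymbol{x}_0\neq0$ and $\|\boldsymbol{x}_0\|_2\neq R$. Let $\boldsymbol{x}^*=R\boldsymbol{x}_0/\|\boldsymbol{x}_0\|_2$ be the closest point of $\partial\mathcal{B}$ to $\boldsymbol{x}_0$ and $\mathcal{T}=\{\boldsymbol{x}:\langle\boldsymbol{x}-\boldsymbol{x}^*,\boldsymbol{x}^*\rangle=0\}$ the tangent hyperplane to $\partial\mathcal{B}$ at $\boldsymbol{x}^*$. Let $\mathcal{S}\subseteq\mathbb{R}^d$ be a linear subspace with orthogonal projection $\mathbf{P}_{\mathcal S}$ such that $\mathbf{P}_{\mathcal S}\boldsymbol{x}_0\neq0$ and such that there exists $\boldsymbol{r}\in\mathcal S$ with $\boldsymbol{x}_0+\boldsymbol{r}\in\partial\mathcal{B}$. Let $\boldsymbol{r}^{\mathcal T}_{\mathcal S}$ be the minimizer of $\|\boldsymbol{r}\|_2$ over $\{\boldsymbol{r}\in\mathcal S:\boldsymbol{x}_0+\boldsymbol{r}\in\mathcal T\}$ and let $\boldsymbol{r}^{\mathcal B}_{\mathcal S}$ be any minimizer of $\|\boldsymbol{r}\|_2$ over $\{\boldsymbol{r}\in\mathcal S:\boldsymbol{x}_0+\boldsymbol{r}\in\partial\mathcal B\}$. Then $\boldsymbol{r}^{\mathcal T}_{\mathcal S}$ and $\boldsymbol{r}^{\mathcal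 B}_{\mathcal S}$ are both scalar multiples of $\mathbf{P}_{\mathcal S}\boldsymbol{x}_0$; in particular they are collinear. *)

theory Defs
  imports "HOL-Analysis.Analysis"
begin

definition is_orth_proj :: "'a::euclidean_space set \<Rightarrow> ('a \<Rightarrow> 'a) \<Rightarrow> bool" where
  "is_orth_proj S P \<longleftrightarrow> (\<forall>x. P x \<in> S \<and> (\<forall>y\<in>S. (x - P x) \<bullet> y = 0))"

definition is_norm_minimizer :: "'a::euclidean_space set \<Rightarrow> 'a \<Rightarrow> bool" where
  "is_norm_minimizer A r \<longleftrightarrow> r \<in> A \<and> (\<forall>s\<in>A. norm r \<le> norm s)"

end

theory Submission
  imports Defs
begin

text \<open>Write \<open>p = P x0\<close>. For \<open>r \<in> S\<close> we have \<open>r \<bullet> x0 = r \<bullet> p\<close> and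
  \<open>\<parallel>x0 + r\<parallel>\<^sup>2 = \<parallel>x0 - p\<parallel>\<^sup>2 + \<parallel>p + r\<parallel>\<^sup>2\<close>, so membership of \<open>x0 + r\<close> in the tangent
  hyperplane depends only on \<open>r \<bullet> p\<close>, and membership in the sphere only on \<open>\<parallel>p + r\<parallel>\<close>.
  If \<open>r\<close> is not a multiple of \<open>p\<close>, the orthogonal projection of \<open>r\<close> onto \<open>p\<close> has the
  same \<open>r \<bullet> p\<close>, and the multiple \<open>b p\<close> with \<open>\<parallel>p + b p\<parallel> = \<parallel>p + r\<parallel>\<close> has the same
  \<open>\<parallel>p + r\<parallel>\<close>; both are strictly shorter than \<open>r\<close> (by Pythagoras, resp. the strict
  reverse triangle inequality). Hence no minimizer can leave the line through \<open>p\<close>.\<close>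

lemma norm_minimizer_scaleR:
  assumes "is_norm_minimizer A r"
    and "\<And>r. r \<in> A \<Longrightarrow> \<nexists>a. r = a *\<^sub>R p \<Longrightarrow> \<exists>b. b *\<^sub>R p \<in> A \<and> norm (b *\<^sub>R p) < norm r"
  shows "\<exists>a. r = a *\<^sub>R p"
  using assms unfolding is_norm_minimizer_def by (meson not_less)

lemma norm_proj_scaleR_less:
  fixes p r :: "'a::real_inner"
  assumes "\<nexists>a. r = a *\<^sub>R p"
  shows "norm ((r \<bullet> p / (p \<bullet> p)) *\<^sub>R p) < norm r"
proof -
  define q where "q = (r \<bullet> p / (p \<bullet> p)) *\<^sub>R p"
  have "r - q \<noteq> 0" using assms unfolding q_def by auto
  moreover have "orthogonal q (r - q)"
    unfolding q_def orthogonal_def by (simp add: inner_diff_right inner_commute)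
  ultimately have "norm q ^ 2 < norm r ^ 2"
    using norm_add_Pythagorean[of q "r - q"] by simp
  then show ?thesis unfolding q_def by (simp add: power_less_imp_less_base)
qed

lemma abs_norm_add_diff_less:
  fixes p r :: "'a::real_inner"
  assumes "p \<noteq> 0" and "\<nexists>a. r = a *\<^sub>R p"
  shows "\<bar>norm (p + r) - norm p\<bar> < norm r"
proof -
  have upper: "norm (p + r) \<noteq> norm p + norm r"
  proof
    assume "norm (p + r) = norm p + norm r"
    then have "norm p *\<^sub>R r = norm r *\<^sub>R p" by (simp add: norm_triangle_eq)
    then have "r = (norm r / norm p) *\<^sub>R p"
      using assms(1) by (metis divide_inverse_commute norm_eq_zero scaleR_scaleR scaleR_one
        left_inverse)
    then show False using assms(2) by blast
  qed
  have lower: "norm p \<noteq> norm (p + r) + norm r"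
  proof
    assume "norm p = norm (p + r) + norm r"
    then have "norm ((p + r) + (- r)) = norm (p + r) + norm (- r)" by simp
    then have "norm (p + r) *\<^sub>R (- r) = norm (- r) *\<^sub>R (p + r)"
      by (rule norm_triangle_eq[THEN iffD1])
    then have "norm (p + r) *\<^sub>R (- r) - norm r *\<^sub>R (p + r) = 0" by simp
    then have "- ((norm (p + r) + norm r) *\<^sub>R r) - norm r *\<^sub>R p = 0"
      by (simp add: algebra_simps)
    then have "(norm (p + r) + norm r) *\<^sub>R r = (- norm r) *\<^sub>R p"
      by (metis diff_eq_eq add.left_neutral minus_equation_iff scaleR_minus_left)
    then have "norm p *\<^sub>R r = (- norm r) *\<^sub>R p" using \<open>norm p = _\<close> by simp
    then have "r = (- norm r / norm p) *\<^sub>R p"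
      using assms(1) by (metis divide_inverse_commute norm_eq_zero scaleR_scaleR scaleR_one
        left_inverse)
    then show False using assms(2) by blast
  qed
  have "norm (p + r) \<le> norm p + norm r" by (rule norm_triangle_ineq)
  moreover have "norm p \<le> norm (p + r) + norm r"
    using norm_triangle_ineq4[of "p + r" r] by simp
  ultimately show ?thesis using upper lower by linarith
qed

lemma exists_scaleR_same_norm_add_less:
  fixes p r :: "'a::real_inner"
  assumes "p \<noteq> 0" and "\<nexists>a. r = a *\<^sub>R p"
  shows "\<exists>b. norm (p + b *\<^sub>R p) = norm (p + r) \<and> norm (b *\<^sub>R p) < norm r"
proof (intro exI conjI)
  define b where "b = norm (p + r) / norm p - 1"
  have "p + b *\<^sub>R p = (norm (p + r) / norm p) *\<^sub>R p"
    unfolding b_def by (simp add: algebra_simps)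
  then show "norm (p + b *\<^sub>R p) = norm (p + r)" using assms(1) by simp
  have "norm (b *\<^sub>R p) = \<bar>norm (p + r) - norm p\<bar>"
    using assms(1) by (simp add: b_def abs_mult[symmetric] field_simps)
  then show "norm (b *\<^sub>R p) < norm r"
    using abs_norm_add_diff_less[OF assms] by simp
qed

lemma orth_proj_in_subspace: "is_orth_proj S P \<Longrightarrow> P x \<in> S"
  unfolding is_orth_proj_def by blast

lemma orth_proj_inner_eq:
  assumes "is_orth_proj S P" and "r \<in> S"
  shows "r \<bullet> x = r \<bullet> P x"
proof -
  have "(x - P x) \<bullet> r = 0" using assms unfolding is_orth_proj_def by blast
  then show ?thesis by (simp add: inner_diff_left inner_diff_right inner_commute)
qed

lemma orth_proj_norm_add_sq:
  assumes "subspace S" and "is_orth_proj S P" and "r \<in> S"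
  shows "norm (x + r) ^ 2 = norm (x - P x) ^ 2 + norm (P x + r) ^ 2"
proof -
  have "P x + r \<in> S"
    using assms by (simp add: orth_proj_in_subspace subspace_add)
  then have "orthogonal (x - P x) (P x + r)"
    using assms(2) unfolding is_orth_proj_def orthogonal_def by blast
  then show ?thesis using norm_add_Pythagorean[of "x - P x" "P x + r"] by simp
qed

lemma norm_minimizer_hyperplane_scaleR_orth_proj:
  assumes "is_orth_proj S P" and "P x0 \<noteq> 0" and "\<And>b. b *\<^sub>R P x0 \<in> S"
    and "is_norm_minimizer {r \<in> S. x0 + r \<in> {x. (x - v) \<bullet> (k *\<^sub>R x0) = 0}} r"
  shows "\<exists>a. r = a *\<^sub>R P x0"
proof (rule norm_minimizer_scaleR[OF assms(4)], safe)
  fix r assume r: "r \<in> S" "\<nexists>a. r = a *\<^sub>R P x0"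
    and on_plane: "(x0 + r - v) \<bullet> (k *\<^sub>R x0) = 0"
  define p where "p = P x0"
  define b where "b = r \<bullet> p / (p \<bullet> p)"
  have "p \<bullet> x0 = p \<bullet> p"
    using orth_proj_inner_eq[OF assms(1) assms(3)[of 1]] by (simp add: p_def)
  then have "(b *\<^sub>R p) \<bullet> x0 = r \<bullet> p"
    using assms(2) by (simp add: b_def p_def[symmetric])
  also have "\<dots> = r \<bullet> x0"
    using orth_proj_inner_eq[OF assms(1) r(1)] by (simp add: p_def)
  finally have "(x0 + b *\<^sub>R p - v) \<bullet> (k *\<^sub>R x0) = 0"
    using on_plane by (simp add: inner_add_left inner_diff_left)
  moreover have "norm (b *\<^sub>R p) < norm r"
    unfolding b_def by (rule norm_proj_scaleR_less[OF r(2)[folded p_def]])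
  ultimately show "\<exists>b. b *\<^sub>R P x0 \<in> {r \<in> S. x0 + r \<in> {x. (x - v) \<bullet> (k *\<^sub>R x0) = 0}}
      \<and> norm (b *\<^sub>R P x0) < norm r"
    using assms(3) unfolding p_def by blast
qed

lemma norm_minimizer_sphere_scaleR_orth_proj:
  assumes "subspace S" and "is_orth_proj S P" and "P x0 \<noteq> 0" and "\<And>b. b *\<^sub>R P x0 \<in> S"
    and "is_norm_minimizer {r \<in> S. x0 + r \<in> sphere 0 R} r"
  shows "\<exists>a. r = a *\<^sub>R P x0"
proof (rule norm_minimizer_scaleR[OF assms(5)], safe)
  fix r assume r: "r \<in> S" "\<nexists>a. r = a *\<^sub>R P x0" and "x0 + r \<in> sphere 0 R"
  obtain b where b: "norm (P x0 + b *\<^sub>R P x0) = norm (P x0 + r)" "norm (b *\<^sub>R P x0) < norm r"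
    using exists_scaleR_same_norm_add_less[OF assms(3) r(2)] by blast
  have "norm (x0 + b *\<^sub>R P x0) ^ 2 = norm (x0 + r) ^ 2"
    using orth_proj_norm_add_sq[OF assms(1,2) assms(4)[of b], of x0]
      orth_proj_norm_add_sq[OF assms(1,2) r(1), of x0] b(1)
    by simp
  then have "norm (x0 + b *\<^sub>R P x0) = norm (x0 + r)" by simp
  then show "\<exists>b. b *\<^sub>R P x0 \<in> {r \<in> S. x0 + r \<in> sphere 0 R} \<and> norm (b *\<^sub>R P x0) < norm r"
    using assms(4) b(2) \<open>x0 + r \<in> sphere 0 R\<close> by auto
qed

theorem lemma6:
  fixes R :: real and x0 :: "'a::euclidean_space" and S :: "'a set"
    and P :: "'a \<Rightarrow> 'a" and rT rB :: 'a
  assumes "R > 0"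
    and "x0 \<noteq> 0" and "norm x0 \<noteq> R"
    and "subspace S" and "is_orth_proj S P" and "P x0 \<noteq> 0"
    and "\<exists>r\<in>S. x0 + r \<in> sphere 0 R"
    and "is_norm_minimizer
           {r \<in> S. x0 + r \<in> {x. (x - (R / norm x0) *\<^sub>R x0) \<bullet> ((R / norm x0) *\<^sub>R x0) = 0}} rT"
    and "is_norm_minimizer {r \<in> S. x0 + r \<in> sphere 0 R} rB"
  shows "(\<exists>a::real. rT = a *\<^sub>R P x0) \<and> (\<exists>b::real. rB = b *\<^sub>R P x0)"
proof -
  have line_in_S: "\<And>b. b *\<^sub>R P x0 \<in> S"
    using assms(4,5) by (simp add: orth_proj_in_subspace subspace_scale)
  show ?thesis
    using norm_minimizer_hyperplane_scaleR_orth_proj[OF assms(5,6) line_in_S assms(8)]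
      norm_minimizer_sphere_scaleR_orth_proj[OF assms(4,5,6) line_in_S assms(9)]
    by blast
qed

end
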